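(* Let $k>1/2$ be real, and let $d$ be a positive odd integer. With the notation of the context, for each $1\le j\le R$, \[ \mathcal{N}_j(d,2k-1)^{\frac{2k}{2k-1}} \le \mathcal{N}_j(d,2k)\,\frac{(1+e^{-\ell_j})^{\frac{2k}{2k-1}}}{(1-e^{-\ell_j})^2} + \mathcal{Q}_j(d), \] where $\mathcal{Q}_j(d)=\Big(\frac{124k^2\,\mathcal{P}_j(d)}{\ell_j}\Big)^{2r_k\ell_j}$ with $r_k=1+\lceil \frac{k}{2k-1}\rceil$.
   Context: $f$ is a fixed holomorphic Hecke eigenform of weight $\kappa$ for $SL_2(\mathbb{Z})$ with Fourier expansion $f(z)=\sum_{n\ge1}\lambda_f(n)n^{(\kappa-1)/2}e(nz)$, where $\lambda_f(n)$ are real, $\lambda_f(1)=1$, $|\lambda_f(n)|\le d(n)$. $\chi_{8d}=\left(\frac{8d}{\cdot}\right)$ is the Kronecker symbol. $X$ is large; $N,M$ are large natural numbers depending only on $k$. Define even natural numbers $\ell_1=2\lceil N\log\log X\rceil$ and $\ell_{j+1}=2\lceil N\log \ell_j\rceil$, and let $R$ be the largest natural number with $\ell_R>10^M$; $M$ is taken large enough that $\ell_j>\ell_{j+1}^2$ for $1\le j\le R-1$. Let $P_1$ be the set of odd primes $\le X^{1/\ell_1^2}$ and, for $2\le j\le R$, $P_j$ the set of primes in $(X^{1/\ell_{j-1}^2},X^{1/\ell_j^2}]$. Set $\mathcal{P}_j(d)=\sum_{p\in P_j}\lambda_f(p)\chi_{8d}(p)/\sqrt p$ (a real number). For an integer $\ell\ge0$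 and real $x$, $E_\ell(x)=\sum_{i=0}^{\ell}x^i/i!$, and for real $\alpha$, $\mathcal{N}_j(d,\alpha)=E_{\ell_j}(\alpha\mathcal{P}_j(d))$, which is positive since $\ell_j$ is even. *)

theory Defs
  imports Complex_Main "HOL-Number_Theory.Number_Theory"
begin

text \<open>ell N X j is ell_j (index j starting at 1; value at 0 is irrelevant).\<close>
fun ell :: "nat \<Rightarrow> real \<Rightarrow> nat \<Rightarrow> nat" where
  "ell N X 0 = 0"
| "ell N X (Suc 0) = 2 * nat \<lceil>real N * ln (ln X)\<rceil>"
| "ell N X (Suc (Suc j)) = 2 * nat \<lceil>real N * ln (real (ell N X (Suc j)))\<rceil>"

definition bigR :: "nat \<Rightarrow> nat \<Rightarrow> real \<Rightarrow> nat" where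
  "bigR N M X = (GREATEST r. r \<ge> 1 \<and> ell N X r > 10 ^ M)"

definition Pset :: "nat \<Rightarrow> real \<Rightarrow> nat \<Rightarrow> nat set" where
  "Pset N X j = (if j = 1
     then {p. prime p \<and> odd p \<and> real p \<le> X powr (1 / (real (ell N X 1))^2)}
     else {p. prime p \<and> X powr (1 / (real (ell N X (j - 1)))^2) < real p
                      \<and> real p \<le> X powr (1 / (real (ell N X j))^2)})"

text \<open>Kronecker symbol chi_{8d}(p) = (8d / p) evaluated at a prime p:
  0 at p = 2, the Legendre symbol at odd primes.\<close>
definition chi8 :: "nat \<Rightarrow> nat \<Rightarrow> real" where
  "chi8 d p = (if p = 2 then 0 else real_of_int (Legendre (int (8 * d)) (int p)))"

definition calP :: "(nat \<Rightarrow> real) \<Rightarrow> nat \<Rightarrow> real \<Rightarrow> nat \<Rightarrow> nat \<Rightarrow> real" where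
  "calP lam N X j d = (\<Sum>p\<in>Pset N X j. lam p * chi8 d p / sqrt (real p))"

definition E :: "nat \<Rightarrow> real \<Rightarrow> real" where
  "E l x = (\<Sum>i=0..l. x ^ i / fact i)"

definition calN :: "(nat \<Rightarrow> real) \<Rightarrow> nat \<Rightarrow> real \<Rightarrow> nat \<Rightarrow> nat \<Rightarrow> real \<Rightarrow> real" where
  "calN lam N X j d \<alpha> = E (ell N X j) (\<alpha> * calP lam N X j d)"

definition rk :: "real \<Rightarrow> nat" where
  "rk k = 1 + nat \<lceil>k / (2 * k - 1)\<rceil>"

definition calQ :: "real \<Rightarrow> (nat \<Rightarrow> real) \<Rightarrow> nat \<Rightarrow> real \<Rightarrow> nat \<Rightarrow> nat \<Rightarrow> real" where
  "calQ k lam N X j d = (124 * k^2 * calP lam N X j d / real (ell N X j)) ^ (2 * rk k * ell N X j)"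

end

theory Submission
  imports Defs
begin

text \<open>
  The inequality holds for every real \<open>x\<close> in place of \<open>\<P>\<^sub>j(d)\<close> and every even
  \<open>\<ell>\<close> in place of \<open>\<ell>\<^sub>j\<close>. Put \<open>p = 2k/(2k-1)\<close> and \<open>\<epsilon> = exp (-\<ell>)\<close>.
  By the Lagrange form of the remainder, \<open>E\<^sub>\<ell> y\<close> agrees with \<open>exp y\<close> up to the
  relative error \<open>\<epsilon>\<close> as long as \<open>|y| \<le> \<ell>/30\<close>. So if \<open>|2kx| \<le> \<ell>/30\<close>, then
  \<open>E\<^sub>\<ell>((2k-1)x)\<^sup>p \<le> (1+\<epsilon>)\<^sup>p exp (2kx) \<le> (1+\<epsilon>)\<^sup>p E\<^sub>\<ell>(2kx) / (1-\<epsilon>)\<close>.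
  Otherwise \<open>w = 124k\<^sup>2|x|/\<ell> \<ge> 31/30\<close>, and writing \<open>|(2k-1)x| = s w\<close> gives
  \<open>E\<^sub>\<ell>((2k-1)x) \<le> w\<^sup>\<ell> exp s\<close>; as \<open>exp (p s) = exp (\<ell>/(62k)) \<le> w\<^sup>2\<^sup>\<ell>\<close>, the
  \<open>p\<close>-th power is at most \<open>w\<^sup>\<ell>\<^sup>(\<^sup>p\<^sup>+\<^sup>2\<^sup>) \<le> \<Q>\<^sub>j(d)\<close>.
\<close>

lemma E_eq_sum_lessThan: "E l y = (\<Sum>m<Suc l. y ^ m / fact m)"
  unfolding E_def by (simp add: atLeast0AtMost lessThan_Suc_atMost)

lemma exp_eq_E_plus_remainder:
  "\<exists>t. \<bar>t\<bar> \<le> \<bar>y\<bar> \<and> exp y = E l y + exp t / fact (Suc l) * y ^ Suc l"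
  using Maclaurin_exp_le[of y "Suc l"] by (simp add: E_eq_sum_lessThan)

lemma E_le_exp:
  assumes "0 \<le> y"
  shows "E l y \<le> exp y"
proof -
  obtain t where "exp y = E l y + exp t / fact (Suc l) * y ^ Suc l"
    using exp_eq_E_plus_remainder by blast
  moreover have "0 \<le> exp t / fact (Suc l) * y ^ Suc l" using assms by simp
  ultimately show ?thesis by linarith
qed

lemma exp_le_E_if_even:
  assumes "even l" and "y \<le> 0"
  shows "exp y \<le> E l y"
proof -
  obtain t where "exp y = E l y + exp t / fact (Suc l) * y ^ Suc l"
    using exp_eq_E_plus_remainder by blast
  moreover have "y ^ Suc l \<le> 0" unfolding power_le_zero_eq using assms by simp
  then have "exp t / fact (Suc l) * y ^ Suc l \<le> 0" by (intro mult_nonneg_nonpos) auto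
  ultimately show ?thesis by linarith
qed

lemma E_ge_1:
  assumes "0 \<le> y"
  shows "1 \<le> E l y"
  using member_le_sum[of 0 "{0..l}" "\<lambda>i. y ^ i / fact i"] assms by (simp add: E_def)

lemma E_pos_if_even:
  assumes "even l"
  shows "0 < E l y"
proof (cases "0 \<le> y")
  case True
  then show ?thesis using E_ge_1[of y l] by simp
next
  case False
  then show ?thesis using exp_le_E_if_even[OF assms, of y] exp_gt_zero[of y] by linarith
qed

lemma abs_exp_minus_E_le:
  "\<bar>exp y - E l y\<bar> \<le> exp \<bar>y\<bar> * \<bar>y\<bar> ^ Suc l / fact (Suc l)"
proof -
  obtain t where "\<bar>t\<bar> \<le> \<bar>y\<bar>" and "exp y = E l y + exp t / fact (Suc l) * y ^ Suc l"
    using exp_eq_E_plus_remainder by blast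
  then have "\<bar>exp y - E l y\<bar> = exp t * \<bar>y\<bar> ^ Suc l / fact (Suc l)"
    by (simp add: abs_mult power_abs)
  also have "\<dots> \<le> exp \<bar>y\<bar> * \<bar>y\<bar> ^ Suc l / fact (Suc l)"
    using \<open>\<bar>t\<bar> \<le> \<bar>y\<bar>\<close> by (intro divide_right_mono mult_right_mono) auto
  finally show ?thesis .
qed

lemma power_div_fact_le_exp: "real n ^ n / fact n \<le> exp (real n)"
  using member_le_sum[of n "{0..n}" "\<lambda>i. real n ^ i / fact i"] E_le_exp[of "real n" n]
  by (simp add: E_def)

lemma exp_3_le: "exp (3::real) \<le> 27"
proof -
  have "exp (3::real) = exp 1 ^ 3" using exp_of_nat_mult[of 3 1] by simp
  also have "\<dots> \<le> 3 ^ 3" by (rule power_mono[OF exp_le]) auto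
  finally show ?thesis by simp
qed

lemma power_mult_exp_div_fact_le:
  assumes "0 \<le> v" and "v \<le> real n / 30"
  shows "v ^ n * exp (2 * v) / fact n \<le> exp (- real n)"
proof -
  have ratio: "v / real n \<le> 1/30"
    using assms by (cases "n = 0") (auto simp: field_simps)
  have "0 < real n ^ n"
    by (cases n) auto
  then have "v ^ n * exp (2 * v) / fact n \<le> v ^ n * exp (2 * v) / (real n ^ n / exp (real n))"
    using power_div_fact_le_exp[of n] assms
    by (intro divide_left_mono) (auto simp: field_simps)
  also have "\<dots> = (v / real n) ^ n * exp (2 * v) * exp (real n)"
    by (simp add: field_simps power_divide)
  also have "\<dots> \<le> (1/30) ^ n * exp (real n / 15) * exp (real n)"
    using assms ratio by (intro mult_right_mono mult_mono power_mono) auto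
  also have "\<dots> = (exp (31/15) / 30) ^ n * exp (- real n)"
    by (simp add: power_divide field_simps exp_of_nat_mult[symmetric] exp_add[symmetric])
  also have "\<dots> \<le> 1 ^ n * exp (- real n)"
    using exp_3_le order_trans[OF exp_mono[of "31/15" 3]]
    by (intro mult_right_mono power_mono) auto
  finally show ?thesis by simp
qed

lemma E_relative_error:
  assumes "\<bar>y\<bar> \<le> real l / 30"
  shows "\<bar>E l y - exp y\<bar> \<le> exp (- real l) * exp y"
proof -
  have "\<bar>E l y - exp y\<bar> \<le> exp \<bar>y\<bar> * \<bar>y\<bar> ^ Suc l / fact (Suc l)"
    using abs_exp_minus_E_le[of y l] by linarith
  also have "\<dots> \<le> exp (2 * \<bar>y\<bar>) * exp y * \<bar>y\<bar> ^ Suc l / fact (Suc l)"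
    by (intro divide_right_mono mult_right_mono) (auto simp: mult_exp_exp)
  also have "\<dots> = \<bar>y\<bar> ^ Suc l * exp (2 * \<bar>y\<bar>) / fact (Suc l) * exp y"
    by simp
  also have "\<dots> \<le> exp (- real (Suc l)) * exp y"
    using assms by (intro mult_right_mono power_mult_exp_div_fact_le) auto
  also have "\<dots> \<le> exp (- real l) * exp y"
    by simp
  finally show ?thesis .
qed

lemma abs_E_le_E_abs: "\<bar>E l y\<bar> \<le> E l \<bar>y\<bar>"
  unfolding E_def by (rule order_trans[OF sum_abs]) (simp add: power_abs)

lemma E_mult_le:
  assumes "1 \<le> w" and "0 \<le> s"
  shows "E l (s * w) \<le> w ^ l * E l s"
  unfolding E_def sum_distrib_left
proof (rule sum_mono)
  fix i assume "i \<in> {0..l}"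
  then have "w ^ i \<le> w ^ l" using assms by (intro power_increasing) auto
  then show "(s * w) ^ i / fact i \<le> w ^ l * (s ^ i / fact i)"
    using assms by (simp add: power_mult_distrib field_simps mult_left_mono)
qed

lemma exp_inverse_31_le: "exp (1/31) \<le> (16/15 :: real)"
proof -
  have "exp 1 \<le> (1 + 1/15 :: real) ^ 31"
    using exp_le Bernoulli_inequality[of "1/15::real" 31] by simp
  then have "exp (1/31) ^ 31 \<le> (16/15 :: real) ^ 31"
    using exp_of_nat_mult[of 31 "1/31::real"] by simp
  then show ?thesis
    by (subst (asm) power_mono_iff) auto
qed

lemma E_powr_le_near_zero:
  fixes p y :: real
  assumes "even l" and "0 < l" and "1 \<le> p" and "\<bar>p * y\<bar> \<le> real l / 30"
  shows "E l y powr p \<le> E l (p * y) * ((1 + exp (- real l)) powr p / (1 - exp (- real l)))"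
proof -
  define \<epsilon> where "\<epsilon> = exp (- real l)"
  have \<epsilon>: "0 < \<epsilon>" "\<epsilon> < 1"
    using \<open>0 < l\<close> by (auto simp: \<epsilon>_def)
  have "\<bar>y\<bar> \<le> \<bar>p * y\<bar>"
    using \<open>1 \<le> p\<close> by (simp add: abs_mult mult_le_cancel_right1)
  then have upper: "E l y \<le> (1 + \<epsilon>) * exp y"
    using E_relative_error[of y l] assms(4) by (simp add: \<epsilon>_def algebra_simps)
  have lower: "(1 - \<epsilon>) * exp (p * y) \<le> E l (p * y)"
    using E_relative_error[of "p * y" l] assms(4) by (simp add: \<epsilon>_def algebra_simps)
  have "E l y powr p \<le> ((1 + \<epsilon>) * exp y) powr p"
    using E_pos_if_even[OF \<open>even l\<close>, of y] upper \<open>1 \<le> p\<close> by (intro powr_mono2) auto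
  also have "\<dots> = (1 + \<epsilon>) powr p * exp (p * y)"
    using \<epsilon> by (simp add: powr_mult exp_powr_real mult.commute)
  also have "\<dots> \<le> (1 + \<epsilon>) powr p * (E l (p * y) / (1 - \<epsilon>))"
    using lower \<epsilon> by (intro mult_left_mono) (auto simp: field_simps)
  finally show ?thesis
    by (simp add: \<epsilon>_def mult_ac)
qed

lemma rk_ge: "k / (2 * k - 1) + 1 \<le> real (rk k)"
  unfolding rk_def using real_nat_ceiling_ge[of "k / (2 * k - 1)"] by simp

lemma exp_inverse_62k_le_square:
  fixes k w :: real
  assumes "1/2 < k" and "31/30 \<le> w"
  shows "exp (1 / (62 * k)) \<le> w^2"
proof -
  have "exp (1 / (62 * k)) \<le> exp (1/31)"
    using assms(1) by (simp add: field_simps)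
  also have "\<dots> \<le> (31/30)^2"
    using exp_inverse_31_le by (simp add: power2_eq_square)
  also have "\<dots> \<le> w^2"
    using assms(2) by (intro power_mono) auto
  finally show ?thesis .
qed

lemma E_powr_le_far:
  fixes k x :: real
  assumes k: "1/2 < k" and "even l" and "0 < l" and far: "real l / 30 < 2 * k * \<bar>x\<bar>"
  shows "E l ((2 * k - 1) * x) powr (2 * k / (2 * k - 1)) \<le> (124 * k^2 * x / real l) ^ (2 * rk k * l)"
proof -
  define p where "p = 2 * k / (2 * k - 1)"
  define w where "w = 124 * k^2 * \<bar>x\<bar> / real l"
  define s where "s = (2 * k - 1) * real l / (124 * k^2)"
  have "124 * k / 60 \<le> w"
    using far k \<open>0 < l\<close> by (simp add: w_def field_simps power2_eq_square)
  then have w: "31/30 \<le> w"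
    using k by linarith
  have s: "0 < s"
    using k \<open>0 < l\<close> by (simp add: s_def)
  have "\<bar>(2 * k - 1) * x\<bar> = s * w"
    using k \<open>0 < l\<close> by (simp add: abs_mult s_def w_def)
  then have "E l ((2 * k - 1) * x) \<le> E l (s * w)"
    using abs_E_le_E_abs[of l "(2 * k - 1) * x"] by simp
  also have "\<dots> \<le> w ^ l * E l s"
    using w s by (intro E_mult_le) auto
  also have "\<dots> \<le> w ^ l * exp s"
    using w s E_le_exp[of s l] by (intro mult_left_mono) auto
  finally have "E l ((2 * k - 1) * x) powr p \<le> (w ^ l * exp s) powr p"
    using E_pos_if_even[OF \<open>even l\<close>, of "(2 * k - 1) * x"] k by (intro powr_mono2) (auto simp: p_def)
  also have "\<dots> = w powr (real l * p) * exp (1 / (62 * k)) ^ l"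
    using w k by (simp add: powr_mult powr_powr exp_powr_real powr_realpow[symmetric]
        exp_of_nat_mult[symmetric] s_def p_def field_simps power2_eq_square)
  also have "\<dots> \<le> w powr (real l * p) * (w^2) ^ l"
    using exp_inverse_62k_le_square[OF k w] by (intro mult_left_mono power_mono) auto
  also have "\<dots> = w powr (real l * p) * w powr real (2 * l)"
    using w by (subst powr_realpow) (auto simp: power_mult)
  also have "\<dots> = w powr (real l * (p + 2))"
    by (simp add: powr_add[symmetric] algebra_simps)
  also have "\<dots> \<le> w powr real (2 * rk k * l)"
    using rk_ge[of k] w \<open>0 < l\<close> by (intro powr_mono) (auto simp: p_def)
  also have "\<dots> = w ^ (2 * rk k * l)"
    using w by (subst powr_realpow) auto
  also have "\<dots> = (124 * k^2 * x / real l) ^ (2 * rk k * l)"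
    using power_even_abs[of "2 * rk k * l" "124 * k^2 * x / real l"]
    by (simp add: w_def abs_mult)
  finally show ?thesis
    by (simp add: p_def)
qed

lemma E_powr_le:
  fixes k x :: real
  assumes k: "1/2 < k" and "even l"
  shows "E l ((2 * k - 1) * x) powr (2 * k / (2 * k - 1))
    \<le> E l (2 * k * x) * ((1 + exp (- real l)) powr (2 * k / (2 * k - 1)) / (1 - exp (- real l))^2)
      + (124 * k^2 * x / real l) ^ (2 * rk k * l)"
proof (cases "l = 0")
  case True
  \<comment> \<open>Both sides are 1: the first summand vanishes through division by zero.\<close>
  then show ?thesis by (simp add: E_def)
next
  case False
  then have "0 < l" by simp
  define p where "p = 2 * k / (2 * k - 1)"
  define \<epsilon> where "\<epsilon> = exp (- real l)"
  have \<epsilon>: "0 < \<epsilon>" "\<epsilon> < 1"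
    using \<open>0 < l\<close> by (auto simp: \<epsilon>_def)
  have p: "1 \<le> p" "p * ((2 * k - 1) * x) = 2 * k * x"
    using k by (auto simp: p_def field_simps)
  have B: "0 < E l (2 * k * x)"
    using E_pos_if_even[OF \<open>even l\<close>] by blast
  have Q: "0 \<le> (124 * k^2 * x / real l) ^ (2 * rk k * l)"
    by (simp add: zero_le_even_power)
  show ?thesis
  proof (cases "\<bar>2 * k * x\<bar> \<le> real l / 30")
    case near: True
    have "E l ((2 * k - 1) * x) powr p \<le> E l (2 * k * x) * ((1 + \<epsilon>) powr p / (1 - \<epsilon>))"
      using E_powr_le_near_zero[OF \<open>even l\<close> \<open>0 < l\<close> p(1), of "(2 * k - 1) * x"] near p(2)
      by (simp add: \<epsilon>_def)
    also have "\<dots> \<le> E l (2 * k * x) * ((1 + \<epsilon>) powr p / (1 - \<epsilon>)^2)"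
      using B \<epsilon> by (intro mult_left_mono divide_left_mono)
        (auto simp: power2_eq_square mult_le_cancel_left1)
    finally show ?thesis
      using Q by (simp add: p_def \<epsilon>_def)
  next
    case far: False
    have "E l ((2 * k - 1) * x) powr p \<le> (124 * k^2 * x / real l) ^ (2 * rk k * l)"
      using E_powr_le_far[OF k \<open>even l\<close> \<open>0 < l\<close>, of x] far k by (simp add: p_def abs_mult)
    moreover have "0 \<le> E l (2 * k * x) * ((1 + \<epsilon>) powr p / (1 - \<epsilon>)^2)"
      using B by simp
    ultimately show ?thesis
      by (simp add: p_def \<epsilon>_def)
  qed
qed

lemma ell_even: "even (ell N X j)"
  by (induction N X j rule: ell.induct) auto

theorem lemma3p4:
  fixes k :: real
  assumes "k > 1 / 2"
  shows "\<exists>N0. \<forall>N\<ge>N0. \<exists>M0. \<forall>M\<ge>M0. \<exists>X0. \<forall>X\<ge>X0.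
    \<forall>lam :: nat \<Rightarrow> real. lam 1 = 1 \<longrightarrow>
      (\<forall>n\<ge>1. \<bar>lam n\<bar> \<le> real (card {m. m dvd n})) \<longrightarrow>
    (\<forall>d :: nat. d > 0 \<longrightarrow> odd d \<longrightarrow>
     (\<forall>j\<in>{1..bigR N M X}.
        calN lam N X j d (2 * k - 1) powr (2 * k / (2 * k - 1))
        \<le> calN lam N X j d (2 * k)
             * ((1 + exp (- real (ell N X j))) powr (2 * k / (2 * k - 1))
                / (1 - exp (- real (ell N X j)))^2)
          + calQ k lam N X j d))"
  unfolding calN_def calQ_def
  by (intro exI allI impI ballI E_powr_le[OF assms ell_even])

end
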